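(* For any graph $G$, $\mathrm{girth}(G)\le \mathrm{Abl}(G)/3$.
   Context: A graph is $G=(V_G,E_G,t_G,h_G)$ with vertex set, edge set and tail/head maps (loops and multiple edges allowed). Directed edges are pairs $(e,\pm)$, with $(e,+)$ going from $t(e)$ to $h(e)$ and $(e,-)$ its inverse. A walk of length $m\ge1$ is a sequence $(u_1,\dots,u_m)$ of directed edges with the head of $u_i$ equal to the tail of $u_{i+1}$; it is closed if its start and end vertices coincide, and non-backtracking if $u_{i+1}$ is never the inverse of $u_i$. The girth of $G$ is the length of its shortest closed non-backtracking walk (of positive length). The abelian girth $\mathrm{Abl}(G)$ is the minimum $m\ge1$ such that there is a closed non-backtracking walk $(u_1,\dots,u_m)$ in which, for every edge $e$, $(e,+)$ appears the same number of times as $(e,-)$ ($\infty$ if none exists). *)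

theory Defs
  imports Main "HOL-Library.Extended_Nat"
begin

text \<open>Directed edges are pairs (e, b) with b = True
  standing for (e,+) and b = False for (e,-).\<close>

definition is_graph :: "'v set \<Rightarrow> 'e set \<Rightarrow> ('e \<Rightarrow> 'v) \<Rightarrow> ('e \<Rightarrow> 'v) \<Rightarrow> bool" where
  "is_graph V E t h \<longleftrightarrow> (\<forall>e\<in>E. t e \<in> V \<and> h e \<in> V)"

definition dtail :: "('e \<Rightarrow> 'v) \<Rightarrow> ('e \<Rightarrow> 'v) \<Rightarrow> 'e \<times> bool \<Rightarrow> 'v" where
  "dtail t h u = (if snd u then t (fst u) else h (fst u))"

definition dhead :: "('e \<Rightarrow> 'v) \<Rightarrow> ('e \<Rightarrow> 'v) \<Rightarrow> 'e \<times> bool \<Rightarrow> 'v" where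
  "dhead t h u = (if snd u then h (fst u) else t (fst u))"

definition dinv :: "'e \<times> bool \<Rightarrow> 'e \<times> bool" where
  "dinv u = (fst u, \<not> snd u)"

definition is_walk :: "'e set \<Rightarrow> ('e \<Rightarrow> 'v) \<Rightarrow> ('e \<Rightarrow> 'v) \<Rightarrow> ('e \<times> bool) list \<Rightarrow> bool" where
  "is_walk E t h w \<longleftrightarrow> length w \<ge> 1 \<and> (\<forall>u\<in>set w. fst u \<in> E) \<and>
     (\<forall>i. Suc i < length w \<longrightarrow> dhead t h (w ! i) = dtail t h (w ! Suc i))"

definition is_closed_walk :: "'e set \<Rightarrow> ('e \<Rightarrow> 'v) \<Rightarrow> ('e \<Rightarrow> 'v) \<Rightarrow> ('e \<times> bool) list \<Rightarrow> bool" where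
  "is_closed_walk E t h w \<longleftrightarrow> is_walk E t h w \<and> dtail t h (hd w) = dhead t h (last w)"

definition non_backtracking :: "('e \<times> bool) list \<Rightarrow> bool" where
  "non_backtracking w \<longleftrightarrow> (\<forall>i. Suc i < length w \<longrightarrow> w ! Suc i \<noteq> dinv (w ! i))"

definition balanced :: "('e \<times> bool) list \<Rightarrow> bool" where
  "balanced w \<longleftrightarrow> (\<forall>e. count_list w (e, True) = count_list w (e, False))"

text \<open>Girth and abelian girth, valued in enat (\<infinity> = Inf of the empty set).\<close>
definition girth :: "'v set \<Rightarrow> 'e set \<Rightarrow> ('e \<Rightarrow> 'v) \<Rightarrow> ('e \<Rightarrow> 'v) \<Rightarrow> enat" where
  "girth V E t h = Inf {enat (length w) | w. is_closed_walk E t h w \<and> non_backtracking w}"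

definition abelian_girth :: "'v set \<Rightarrow> 'e set \<Rightarrow> ('e \<Rightarrow> 'v) \<Rightarrow> ('e \<Rightarrow> 'v) \<Rightarrow> enat" where
  "abelian_girth V E t h =
     Inf {enat (length w) | w. is_closed_walk E t h w \<and> non_backtracking w \<and> balanced w}"

end

theory Submission
  imports Defs
begin

text \<open>A balanced closed non-backtracking walk whose last edge is the inverse of its first
  can be shortened by dropping both, so we may assume it is cyclically reduced and read it as an
  m-periodic non-backtracking sequence of directed edges W. Let d be the least positive shift
  with a repeated vertex along W; the segment realising it is a closed non-backtracking walk, so
  the girth is at most d. By balancedness the inverse of the edge W a occurs at some p in
  [a, a + m), so the shift c = p + 1 - a is a repeat and c \<ge> d. If c = d, the segment of length
  d ends by backtracking its first edge, and removing both ends yields the shorter repeat d - 2.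
  If c > d, the shifts d, c - d and m - c are all repeats (m - c > 0 as W does not backtrack
  across a period), so each is at least d and 3d \<le> m.\<close>

lemma dinv_dinv [simp]: "dinv (dinv u) = u"
  by (simp add: dinv_def)

lemma dinv_neq_self [simp]: "dinv u \<noteq> u" "u \<noteq> dinv u"
  by (simp_all add: dinv_def prod_eq_iff)

lemma dhead_dinv [simp]: "dhead t h (dinv u) = dtail t h u"
  by (simp add: dinv_def dhead_def dtail_def)

lemma dtail_dinv [simp]: "dtail t h (dinv u) = dhead t h u"
  by (simp add: dinv_def dhead_def dtail_def)

lemma successively_iff_nth:
  "successively P xs \<longleftrightarrow> (\<forall>i. Suc i < length xs \<longrightarrow> P (xs ! i) (xs ! Suc i))"
  by (induction P xs rule: successively.induct) (auto simp: nth_Cons split: nat.split)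

lemma is_walk_iff_successively:
  "is_walk E t h w \<longleftrightarrow>
     w \<noteq> [] \<and> fst ` set w \<subseteq> E \<and> successively (\<lambda>u v. dhead t h u = dtail t h v) w"
  by (auto simp: is_walk_def successively_iff_nth Suc_le_eq)

lemma non_backtracking_iff_successively:
  "non_backtracking w \<longleftrightarrow> successively (\<lambda>u v. v \<noteq> dinv u) w"
  by (simp add: non_backtracking_def successively_iff_nth)

lemma successively_cyclic_nth:
  assumes "successively P w" and "P (last w) (hd w)" and "w \<noteq> []"
  shows "P (w ! (j mod length w)) (w ! (Suc j mod length w))"
proof (cases "Suc (j mod length w) = length w")
  case True
  then have "j mod length w = length w - 1" by simp
  with True show ?thesis
    using assms(2,3) by (simp add: mod_Suc hd_conv_nth last_conv_nth)
next
  case False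
  moreover have "j mod length w < length w" using assms(3) by simp
  ultimately show ?thesis
    using assms(1) by (simp add: mod_Suc successively_iff_nth)
qed

lemma balanced_dinv_mem:
  assumes "balanced w" and "u \<in> set w"
  shows "dinv u \<in> set w"
proof (cases u)
  case (Pair e b)
  have "count_list w (e, \<not> b) = count_list w (e, b)"
    using assms(1) by (cases b) (simp_all add: balanced_def)
  then show ?thesis
    using assms(2) Pair by (metis count_list_0_iff dinv_def fst_conv snd_conv)
qed

lemma closed_walk_remove_wrap_backtrack:
  assumes "is_closed_walk E t h (x # w @ [dinv x])" and "non_backtracking (x # w @ [dinv x])"
  shows "is_closed_walk E t h w" and "non_backtracking w"
proof -
  have "w \<noteq> []"
    using assms(2) by (auto simp: non_backtracking_iff_successively)
  then show "is_closed_walk E t h w" "non_backtracking w"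
    using assms
    by (auto simp: is_closed_walk_def is_walk_iff_successively non_backtracking_iff_successively
        successively_Cons successively_append_iff hd_append)
qed

lemma balanced_remove_wrap_backtrack:
  "balanced (x # w @ [dinv x]) \<longleftrightarrow> balanced w"
  by (cases x) (auto simp: balanced_def dinv_def)

lemma periodic_add_mult:
  fixes f :: "nat \<Rightarrow> 'a"
  assumes "\<And>j. f (j + m) = f j"
  shows "f (j + k * m) = f j"
proof (induction k)
  case (Suc k)
  have "j + Suc k * m = (j + k * m) + m" by simp
  then show ?case using Suc assms by presburger
qed simp

lemma periodic_value_in_window:
  fixes f :: "nat \<Rightarrow> 'a"
  assumes per: "\<And>j. f (j + m) = f j" and m: "m > 0"
  shows "\<exists>p. a \<le> p \<and> p < a + m \<and> f p = f i"
proof -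
  have perk: "f (j + k * m) = f j" for j k by (rule periodic_add_mult[where f = f, OF per])
  define q r where "q = a div m" and "r = i mod m"
  have a: "q * m \<le> a" "a < q * m + m"
    using div_mult_mod_eq[of a m] mod_less_divisor[OF m, of a] unfolding q_def by linarith+
  have r: "r < m" and fi: "f i = f r"
    using m perk[of r "i div m"] by (simp_all add: r_def)
  show ?thesis
  proof (cases "a \<le> r + q * m")
    case True
    then show ?thesis using a r fi perk[of r q] by (intro exI[of _ "r + q * m"]) simp
  next
    case False
    then show ?thesis using a r fi perk[of r "Suc q"]
      by (intro exI[of _ "r + Suc q * m"]) simp
  qed
qed

lemma segment_closed_walk:
  fixes W :: "nat \<Rightarrow> 'e \<times> bool"
  assumes adj: "\<And>j. dhead t h (W j) = dtail t h (W (Suc j))"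
    and no_backtrack: "\<And>j. W (Suc j) \<noteq> dinv (W j)"
    and edges: "\<And>j. fst (W j) \<in> E"
    and "d \<ge> 1" and closed: "dtail t h (W a) = dtail t h (W (a + d))"
  shows "is_closed_walk E t h (map W [a..<a + d])" and "non_backtracking (map W [a..<a + d])"
proof -
  have "dhead t h (W (a + (d - 1))) = dtail t h (W (a + d))"
    using adj[of "a + (d - 1)"] \<open>d \<ge> 1\<close> by simp
  then show "is_closed_walk E t h (map W [a..<a + d])"
    using \<open>d \<ge> 1\<close> closed
    by (auto simp: is_closed_walk_def is_walk_def edges adj hd_map last_map)
  show "non_backtracking (map W [a..<a + d])"
    by (simp add: non_backtracking_def no_backtrack)
qed

lemma backtracking_segment_vertex_repeat:
  fixes W :: "nat \<Rightarrow> 'e \<times> bool"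
  assumes adj: "\<And>j. dhead t h (W j) = dtail t h (W (Suc j))"
    and no_backtrack: "\<And>j. W (Suc j) \<noteq> dinv (W j)"
    and "W (a + k) = dinv (W a)"
  shows "k \<ge> 2" and "dtail t h (W (Suc a)) = dtail t h (W (Suc a + (k - 1)))"
proof -
  have "k \<noteq> 0"
  proof
    assume "k = 0"
    then show False using assms(3) by simp
  qed
  moreover have "k \<noteq> 1"
    using assms(3) no_backtrack[of a] by auto
  ultimately show "k \<ge> 2" by simp
  then have "Suc a + (k - 1) = a + k" by simp
  then show "dtail t h (W (Suc a)) = dtail t h (W (Suc a + (k - 1)))"
    using adj[of a] assms(3) by simp
qed

lemma cyclic_walk_short_vertex_repeat:
  fixes W :: "nat \<Rightarrow> 'e \<times> bool"
  assumes "m > 0" and per: "\<And>j. W (j + m) = W j"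
    and adj: "\<And>j. dhead t h (W j) = dtail t h (W (Suc j))"
    and no_backtrack: "\<And>j. W (Suc j) \<noteq> dinv (W j)"
    and inv: "\<And>j. \<exists>r. W r = dinv (W j)"
  shows "\<exists>a d. d \<ge> 1 \<and> 3 * d \<le> m \<and> dtail t h (W a) = dtail t h (W (a + d))"
proof -
  define D where "D j = dtail t h (W j)" for j
  define repeat where "repeat d \<longleftrightarrow> d \<ge> 1 \<and> (\<exists>a. D a = D (a + d))" for d
  have "repeat m"
    using \<open>m > 0\<close> per[of 0] unfolding repeat_def D_def by (intro conjI exI[of _ 0]) simp_all
  define d where "d = (LEAST d. repeat d)"
  have "repeat d"
    unfolding d_def using \<open>repeat m\<close> by (rule LeastI)
  then obtain a where "d \<ge> 1" and "D a = D (a + d)"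
    unfolding repeat_def by blast
  have minimal: "d \<le> c" if "D b = D (b + c)" "c \<ge> 1" for b c
    using that Least_le[of repeat c] unfolding d_def repeat_def by blast
  obtain r where "W r = dinv (W a)"
    using inv by blast
  then obtain p where p: "a \<le> p" "p < a + m" "W p = dinv (W a)"
    using periodic_value_in_window[where f = W, OF per \<open>m > 0\<close>, of a r] by auto
  define c where "c = Suc p - a"
  have c: "c \<ge> 1" "c \<le> m" "Suc p = a + c"
    using p(1,2) by (simp_all add: c_def)
  have "D (a + c) = D a"
    using adj[of p] p(3) c(3) by (simp add: D_def)
  then have "d \<le> c"
    using minimal[of a c] c(1) by simp
  then consider "c = d" | "d < c" by linarith
  then show ?thesis
  proof cases
    case 1
    have "p = a + (p - a)" using p(1) by simp
    then have "p - a \<ge> 2" and "D (Suc a) = D (Suc a + (p - a - 1))"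
      using backtracking_segment_vertex_repeat[where W = W, OF adj no_backtrack, of a "p - a"] p(3)
      unfolding D_def by auto
    then have "d \<le> p - a - 1"
      using minimal[of "Suc a" "p - a - 1"] by simp
    then have False
      using 1 c(3) \<open>d \<ge> 1\<close> by linarith
    then show ?thesis ..
  next
    case 2
    have "D (a + d) = D ((a + d) + (c - d))"
      using \<open>D a = D (a + d)\<close> \<open>D (a + c) = D a\<close> 2 by simp
    then have "d \<le> c - d"
      by (rule minimal) (use 2 in simp)
    moreover have "c \<noteq> m"
    proof
      assume "c = m"
      then have "W (Suc p) = W a" using c(3) per[of a] by simp
      then show False using no_backtrack[of p] p(3) by simp
    qed
    then have "D (a + c) = D ((a + c) + (m - c))"
      using \<open>D (a + c) = D a\<close> per[of a] c(2) by (simp add: D_def)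
    then have "d \<le> m - c"
      by (rule minimal) (use c(2) \<open>c \<noteq> m\<close> in simp)
    ultimately show ?thesis
      using \<open>d \<ge> 1\<close> \<open>D a = D (a + d)\<close> c(2) unfolding D_def by (intro exI[of _ a] exI[of _ d]) simp
  qed
qed

lemma girth_le_length:
  assumes "is_closed_walk E t h w" and "non_backtracking w"
  shows "girth V E t h \<le> enat (length w)"
  unfolding girth_def using assms by (intro Inf_lower) blast

lemma three_girth_le_cyclically_reduced:
  assumes closed: "is_closed_walk E t h w" and nb: "non_backtracking w" and bal: "balanced w"
    and reduced: "hd w \<noteq> dinv (last w)"
  shows "3 * girth V E t h \<le> enat (length w)"
proof -
  define m where "m = length w"
  define W where "W j = w ! (j mod m)" for j
  have "w \<noteq> []" and "m > 0"
    using closed by (auto simp: m_def is_closed_walk_def is_walk_iff_successively)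
  have W_mem: "W j \<in> set w" for j
    using \<open>m > 0\<close> by (simp add: W_def m_def)
  have per: "W (j + m) = W j" for j
    by (simp add: W_def)
  have adj: "dhead t h (W j) = dtail t h (W (Suc j))" for j
    using successively_cyclic_nth[of "\<lambda>u v. dhead t h u = dtail t h v" w j] closed \<open>w \<noteq> []\<close>
    by (simp add: W_def m_def is_closed_walk_def is_walk_iff_successively)
  have no_backtrack: "W (Suc j) \<noteq> dinv (W j)" for j
    using successively_cyclic_nth[of "\<lambda>u v. v \<noteq> dinv u" w j] nb reduced \<open>w \<noteq> []\<close>
    by (simp add: W_def m_def non_backtracking_iff_successively)
  have edges: "fst (W j) \<in> E" for j
    using W_mem closed by (auto simp: is_closed_walk_def is_walk_def)
  have inv: "\<exists>r. W r = dinv (W j)" for j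
  proof -
    obtain r where "r < m" "w ! r = dinv (W j)"
      using balanced_dinv_mem[OF bal W_mem] by (auto simp: m_def in_set_conv_nth)
    then show ?thesis by (auto simp: W_def intro!: exI[of _ r])
  qed
  obtain a d where d: "d \<ge> 1" "3 * d \<le> m" "dtail t h (W a) = dtail t h (W (a + d))"
    using cyclic_walk_short_vertex_repeat[OF \<open>m > 0\<close> per adj no_backtrack inv] by blast
  have "girth V E t h \<le> enat d"
    using girth_le_length segment_closed_walk[OF adj no_backtrack edges d(1,3)] by fastforce
  then have "3 * girth V E t h \<le> enat (3 * d)"
    by (simp add: mult_left_mono numeral_eq_enat flip: times_enat_simps(1))
  also have "\<dots> \<le> enat (length w)"
    using d(2) by (simp add: m_def)
  finally show ?thesis .
qed

lemma three_girth_le_balanced: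
  assumes "is_closed_walk E t h w" and "non_backtracking w" and "balanced w"
  shows "3 * girth V E t h \<le> enat (length w)"
  using assms
proof (induction "length w" arbitrary: w rule: less_induct)
  case less
  show ?case
  proof (cases "hd w = dinv (last w)")
    case True
    obtain x v where w: "w = x # v"
      using less.prems(1) by (cases w) (auto simp: is_closed_walk_def is_walk_def)
    have "v \<noteq> []"
      using True w by auto
    then have "last v = dinv x"
      using True w by auto
    then have w: "w = x # butlast v @ [dinv x]"
      using w append_butlast_last_id[OF \<open>v \<noteq> []\<close>] by simp
    have "length (butlast v) < length w"
      using w by simp
    moreover have "is_closed_walk E t h (butlast v)" "non_backtracking (butlast v)"
      "balanced (butlast v)"
      using closed_walk_remove_wrap_backtrack[OF less.prems(1,2)[unfolded w]]
        less.prems(3)[unfolded w balanced_remove_wrap_backtrack] by blast+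
    ultimately have "3 * girth V E t h \<le> enat (length (butlast v))"
      by (rule less.hyps)
    also have "\<dots> \<le> enat (length w)"
      using w by simp
    finally show ?thesis .
  next
    case False
    then show ?thesis
      using three_girth_le_cyclically_reduced less.prems by blast
  qed
qed

theorem theorem2p6:
  fixes V :: "'v set" and E :: "'e set" and t h :: "'e \<Rightarrow> 'v"
  assumes "is_graph V E t h"
  shows "3 * girth V E t h \<le> abelian_girth V E t h"
  unfolding abelian_girth_def
  by (rule Inf_greatest) (auto intro: three_girth_le_balanced)

end
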